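(* Let $G=(V,E)$ be a finite simple graph that is both $P_6$-free and banner-free. If $G$ has an efficient dominating set, then the square $G^2$ is $P_6$-free.
   Context: All graphs are finite, undirected and simple. $P_t$ denotes the path on $t$ vertices. For a family $\mathcal{F}$ of graphs, a graph $G$ is $\mathcal{F}$-free if it contains no induced subgraph isomorphic to a member of $\mathcal{F}$. A banner is the graph obtained from a chordless cycle on four vertices by adding one new vertex adjacent to exactly one vertex of the cycle. An efficient dominating set of $G$ is a subset $D\subseteq V$ that is an independent set such that every vertex of $V\setminus D$ has exactly one neighbor in $D$. For vertices $u,v$, $\mathrm{dist}_G(u,v)$ is the distance between them in $G$. The square of $G=(V,E)$ is the graph $G^2=(V,E^2)$ where $uv\in E^2$ if and only if $\mathrm{dist}_G(u,v)\in\{1,2\}$. *)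

theory Defs
  imports Main
begin

definition simple_graph :: "'a set \<Rightarrow> ('a \<Rightarrow> 'a \<Rightarrow> bool) \<Rightarrow> bool" where
  "simple_graph V E \<longleftrightarrow> finite V \<and> (\<forall>u v. E u v \<longrightarrow> u \<in> V \<and> v \<in> V)
     \<and> (\<forall>u v. E u v \<longrightarrow> E v u) \<and> (\<forall>v. \<not> E v v)"

definition has_induced :: "'a set \<Rightarrow> ('a \<Rightarrow> 'a \<Rightarrow> bool) \<Rightarrow> 'b set \<Rightarrow> ('b \<Rightarrow> 'b \<Rightarrow> bool) \<Rightarrow> bool" where
  "has_induced V E W F \<longleftrightarrow> (\<exists>f. inj_on f W \<and> f ` W \<subseteq> V \<and>
      (\<forall>x\<in>W. \<forall>y\<in>W. E (f x) (f y) \<longleftrightarrow> F x y))"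

definition path_verts :: "nat \<Rightarrow> nat set" where
  "path_verts t = {0..<t}"
definition path_adj :: "nat \<Rightarrow> nat \<Rightarrow> bool" where
  "path_adj i j \<longleftrightarrow> i = Suc j \<or> j = Suc i"

definition banner_verts :: "nat set" where
  "banner_verts = {0..<5}"
definition banner_adj :: "nat \<Rightarrow> nat \<Rightarrow> bool" where
  "banner_adj i j \<longleftrightarrow> {i, j} \<in> {{0,1}, {1,2}, {2,3}, {3,0}, {0,4}}"

definition P_free :: "nat \<Rightarrow> 'a set \<Rightarrow> ('a \<Rightarrow> 'a \<Rightarrow> bool) \<Rightarrow> bool" where
  "P_free t V E \<longleftrightarrow> \<not> has_induced V E (path_verts t) path_adj"

definition banner_free :: "'a set \<Rightarrow> ('a \<Rightarrow> 'a \<Rightarrow> bool) \<Rightarrow> bool" where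
  "banner_free V E \<longleftrightarrow> \<not> has_induced V E banner_verts banner_adj"

definition efficient_dominating_set :: "'a set \<Rightarrow> ('a \<Rightarrow> 'a \<Rightarrow> bool) \<Rightarrow> 'a set \<Rightarrow> bool" where
  "efficient_dominating_set V E D \<longleftrightarrow> D \<subseteq> V \<and> (\<forall>x\<in>D. \<forall>y\<in>D. \<not> E x y)
     \<and> (\<forall>v\<in>V - D. \<exists>!d. d \<in> D \<and> E v d)"

text \<open>Graph distance: dist_le V E k u v holds iff there is a walk of length at most k
  from u to v; dist_G(u,v) = d iff dist_le d holds and dist_le (d-1) does not.\<close>
fun walk_le :: "('a \<Rightarrow> 'a \<Rightarrow> bool) \<Rightarrow> nat \<Rightarrow> 'a \<Rightarrow> 'a \<Rightarrow> bool" where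
  "walk_le E 0 u v \<longleftrightarrow> u = v"
| "walk_le E (Suc k) u v \<longleftrightarrow> u = v \<or> (\<exists>w. E u w \<and> walk_le E k w v)"

text \<open>Square: uv is an edge iff dist(u,v) \<in> {1,2}, i.e. u \<noteq> v and there is a walk of length \<le> 2.\<close>
definition square :: "('a \<Rightarrow> 'a \<Rightarrow> bool) \<Rightarrow> 'a \<Rightarrow> 'a \<Rightarrow> bool" where
  "square E u v \<longleftrightarrow> u \<noteq> v \<and> walk_le E 2 u v"

end

theory Submission
  imports Defs
begin

text \<open>
  Let \<open>p\<^sub>0, \<dots>, p\<^sub>5\<close> be an induced \<open>P\<^sub>6\<close> of \<open>G\<^sup>2\<close>: consecutive vertices are at distance
  at most 2 in \<open>G\<close>, all other pairs at distance at least 3. If one of the inner pairs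
  \<open>p\<^sub>1p\<^sub>2, p\<^sub>2p\<^sub>3, p\<^sub>3p\<^sub>4\<close> were an edge of \<open>G\<close>, the midpoints of its two neighbouring pairs
  would produce an induced \<open>P\<^sub>6\<close> or banner in \<open>G\<close>; so these pairs have common neighbours
  \<open>q\<^sub>1, q\<^sub>2, q\<^sub>3\<close>, and the end pairs are edges or have common neighbours \<open>q\<^sub>0, q\<^sub>4\<close>.
  Along the resulting spine \<open>p\<^sub>0 (q\<^sub>0) p\<^sub>1 q\<^sub>1 p\<^sub>2 q\<^sub>2 p\<^sub>3 q\<^sub>3 p\<^sub>4 (q\<^sub>4) p\<^sub>5\<close> the only
  undetermined adjacencies are those among the \<open>q\<^sub>i\<close>. If both end pairs are edges, \<open>P\<^sub>6\<close>-freeness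
  alone forces a contradiction. Otherwise the efficient dominating set \<open>D\<close> is used: every
  vertex \<open>v\<close> has a unique dominator \<open>\<delta> v \<in> D\<close> in its closed neighbourhood, and a vertex of \<open>D\<close>
  is adjacent exactly to the vertices it dominates. Hence attaching dominators to the ends of
  short induced paths of the spine yields further induced \<open>P\<^sub>6\<close>s and banners, and every possible
  placement of the dominators contains one of them.
\<close>

definition induced_path :: "('a \<Rightarrow> 'a \<Rightarrow> bool) \<Rightarrow> 'a list \<Rightarrow> bool" where
  "induced_path E xs \<longleftrightarrow> distinct xs \<and>
     (\<forall>i < length xs. \<forall>j < length xs. E (xs ! i) (xs ! j) \<longleftrightarrow> path_adj i j)"

lemma has_induced_path_iff:
  "has_induced V E (path_verts n) path_adj \<longleftrightarrow>
     (\<exists>xs. length xs = n \<and> set xs \<subseteq> V \<and> induced_path E xs)"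
proof
  assume "has_induced V E (path_verts n) path_adj"
  then obtain f where "inj_on f {0..<n}" "f ` {0..<n} \<subseteq> V"
    and "\<forall>i\<in>{0..<n}. \<forall>j\<in>{0..<n}. E (f i) (f j) \<longleftrightarrow> path_adj i j"
    by (auto simp: has_induced_def path_verts_def)
  then have "length (map f [0..<n]) = n \<and> set (map f [0..<n]) \<subseteq> V \<and>
      induced_path E (map f [0..<n])"
    by (auto simp: induced_path_def distinct_map)
  then show "\<exists>xs. length xs = n \<and> set xs \<subseteq> V \<and> induced_path E xs" ..
next
  assume "\<exists>xs. length xs = n \<and> set xs \<subseteq> V \<and> induced_path E xs"
  then obtain xs where "length xs = n" "set xs \<subseteq> V" "induced_path E xs" by blast
  then show "has_induced V E (path_verts n) path_adj"
    unfolding has_induced_def path_verts_def induced_path_def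
    by (intro exI[of _ "nth xs"]) (auto simp: inj_on_def nth_eq_iff_index_eq)
qed

lemma induced_path_rev: "induced_path E (rev xs) \<longleftrightarrow> induced_path E xs"
proof -
  have "induced_path E (rev ys)" if "induced_path E ys" for ys
  proof -
    have "path_adj (length ys - Suc i) (length ys - Suc j) \<longleftrightarrow> path_adj i j"
      if "i < length ys" "j < length ys" for i j
      using that by (auto simp: path_adj_def)
    with \<open>induced_path E ys\<close> show ?thesis
      by (auto simp: induced_path_def rev_nth)
  qed
  from this[of xs] this[of "rev xs"] show ?thesis by auto
qed

lemma walk_le_2_iff: "walk_le E 2 u v \<longleftrightarrow> u = v \<or> E u v \<or> (\<exists>w. E u w \<and> E w v)"
  by (auto simp: numeral_2_eq_2)

lemma not_walk_le_2_iff: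
  "\<not> walk_le E 2 u v \<longleftrightarrow> u \<noteq> v \<and> \<not> E u v \<and> (\<forall>w. E u w \<longrightarrow> \<not> E w v)"
  by (auto simp: walk_le_2_iff)

lemma square_nonadjacent_midpoint: "square E u v \<Longrightarrow> \<not> E u v \<Longrightarrow> \<exists>w. E u w \<and> E w v"
  by (auto simp: square_def walk_le_2_iff)

definition dominator :: "('a \<Rightarrow> 'a \<Rightarrow> bool) \<Rightarrow> 'a set \<Rightarrow> 'a \<Rightarrow> 'a" where
  "dominator E D v = (THE d. d \<in> D \<and> (d = v \<or> E v d))"

context
  fixes V :: "'a set" and E :: "'a \<Rightarrow> 'a \<Rightarrow> bool" and D :: "'a set"
  assumes eds: "efficient_dominating_set V E D"
begin

lemma efficient_dominating_set_ex1_dominator: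
  assumes "v \<in> V" shows "\<exists>!d. d \<in> D \<and> (d = v \<or> E v d)"
proof (cases "v \<in> D")
  case True
  with eds show ?thesis by (auto simp: efficient_dominating_set_def)
next
  case False
  with eds assms have "\<exists>!d. d \<in> D \<and> E v d" by (auto simp: efficient_dominating_set_def)
  with False show ?thesis by metis
qed

lemma dominator_in_D: "v \<in> V \<Longrightarrow> dominator E D v \<in> D"
  and dominator_eq_or_adj: "v \<in> V \<Longrightarrow> dominator E D v = v \<or> E v (dominator E D v)"
  using theI'[OF efficient_dominating_set_ex1_dominator] by (simp_all add: dominator_def)

lemma dominator_unique: "v \<in> V \<Longrightarrow> d \<in> D \<Longrightarrow> d = v \<or> E v d \<Longrightarrow> dominator E D v = d"
  using efficient_dominating_set_ex1_dominator dominator_in_D dominator_eq_or_adj by blast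

lemma efficient_dominating_set_independent: "x \<in> D \<Longrightarrow> y \<in> D \<Longrightarrow> \<not> E x y"
  using eds by (auto simp: efficient_dominating_set_def)

end

locale P6_banner_free_graph =
  fixes V :: "'a set" and E :: "'a \<Rightarrow> 'a \<Rightarrow> bool"
  assumes simple: "simple_graph V E"
    and P6_free: "P_free 6 V E"
    and banner_free: "banner_free V E"
begin

lemma edge_sym: "E u v \<Longrightarrow> E v u"
  and edge_irrefl: "\<not> E v v"
  and edge_in_V: "E u v \<Longrightarrow> u \<in> V"
  using simple by (auto simp: simple_graph_def)

lemma no_induced_P6:
  assumes "a \<noteq> b" "a \<noteq> c" "a \<noteq> d" "a \<noteq> e" "a \<noteq> f" "b \<noteq> c" "b \<noteq> d" "b \<noteq> e"
    and "b \<noteq> f" "c \<noteq> d" "c \<noteq> e" "c \<noteq> f" "d \<noteq> e" "d \<noteq> f" "e \<noteq> f"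
    and "E a b" "E b c" "E c d" "E d e" "E e f"
    and "\<not> E a c" "\<not> E a d" "\<not> E a e" "\<not> E a f" "\<not> E b d"
    and "\<not> E b e" "\<not> E b f" "\<not> E c e" "\<not> E c f" "\<not> E d f"
  shows False
proof -
  let ?f = "nth [a, b, c, d, e, f]"
  have "path_verts 6 = {0, 1, 2, 3, 4, 5}" by (auto simp: path_verts_def)
  moreover have "inj_on ?f {0, 1, 2, 3, 4, 5}" using assms(1-15) by (auto simp: inj_on_def)
  moreover have "?f ` {0, 1, 2, 3, 4, 5} \<subseteq> V" using assms(16-20) edge_in_V edge_sym by auto
  moreover have "\<forall>x\<in>{0, 1, 2, 3, 4, 5}. \<forall>y\<in>{0, 1, 2, 3, 4, 5}. E (?f x) (?f y) \<longleftrightarrow> path_adj x y"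
    using assms edge_sym edge_irrefl by (auto simp: path_adj_def)
  ultimately have "has_induced V E (path_verts 6) path_adj"
    unfolding has_induced_def by metis
  with P6_free show False by (simp add: P_free_def)
qed

lemma no_induced_banner:
  assumes "a \<noteq> b" "a \<noteq> c" "a \<noteq> d" "a \<noteq> e" "b \<noteq> c" "b \<noteq> d" "b \<noteq> e" "c \<noteq> d"
    and "c \<noteq> e" "d \<noteq> e"
    and "E a b" "E b c" "E c d" "E d a" "E a e"
    and "\<not> E a c" "\<not> E b d" "\<not> E b e" "\<not> E c e" "\<not> E d e"
  shows False
proof -
  let ?f = "nth [a, b, c, d, e]"
  have "banner_verts = {0, 1, 2, 3, 4}" by (auto simp: banner_verts_def)
  moreover have "inj_on ?f {0, 1, 2, 3, 4}" using assms(1-10) by (auto simp: inj_on_def)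
  moreover have "?f ` {0, 1, 2, 3, 4} \<subseteq> V" using assms(11-15) edge_in_V edge_sym by auto
  moreover have "\<forall>x\<in>{0, 1, 2, 3, 4}. \<forall>y\<in>{0, 1, 2, 3, 4}. E (?f x) (?f y) \<longleftrightarrow> banner_adj x y"
    using assms edge_sym edge_irrefl by (auto simp: banner_adj_def doubleton_eq_iff)
  ultimately have "has_induced V E banner_verts banner_adj"
    unfolding has_induced_def by metis
  with banner_free show False by (simp add: banner_free_def)
qed

text \<open>
  With midpoints \<open>u\<close> of \<open>a b\<close> and \<open>w\<close> of \<open>c d\<close>, an edge \<open>b c\<close> would give the induced path
  \<open>a u b c w d\<close>, or, if \<open>u w\<close> is an edge, the banner on the cycle \<open>u b c w\<close> with pendant \<open>a\<close>.
\<close>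

lemma square_P4_inner_not_adjacent:
  assumes ab: "walk_le E 2 a b" and cd: "walk_le E 2 c d"
    and far: "\<not> walk_le E 2 a c" "\<not> walk_le E 2 b d" "\<not> walk_le E 2 a d"
  shows "\<not> E b c"
proof
  assume bc: "E b c"
  have "a \<noteq> b" "\<not> E a b" "c \<noteq> d" "\<not> E c d"
    using bc far edge_sym by (auto simp: walk_le_2_iff)
  with ab cd obtain u w where u: "E a u" "E u b" and w: "E c w" "E w d"
    by (auto simp: walk_le_2_iff)
  note far_unfolded = far[unfolded not_walk_le_2_iff]
  show False
  proof (cases "E u w")
    case True
    then show False
      using no_induced_banner[of u b c w a] u w bc far_unfolded edge_sym by smt
  next
    case False
    then show False
      using no_induced_P6[of a u b c w d] u w bc far_unfolded edge_sym by smt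
  qed
qed

end

locale square_P6 = P6_banner_free_graph +
  fixes p0 p1 p2 p3 p4 p5 :: 'a
  assumes induced_in_square: "induced_path (square E) [p0, p1, p2, p3, p4, p5]"
begin

lemma distinct_path: "distinct [p0, p1, p2, p3, p4, p5]"
  and square_nth: "i < 6 \<Longrightarrow> j < 6 \<Longrightarrow>
    square E ([p0, p1, p2, p3, p4, p5] ! i) ([p0, p1, p2, p3, p4, p5] ! j) \<longleftrightarrow> path_adj i j"
  using induced_in_square by (simp_all add: induced_path_def)

lemma near: "square E p0 p1" "square E p1 p2" "square E p2 p3" "square E p3 p4" "square E p4 p5"
  and far: "\<not> walk_le E 2 p0 p2" "\<not> walk_le E 2 p0 p3" "\<not> walk_le E 2 p0 p4"
    "\<not> walk_le E 2 p0 p5" "\<not> walk_le E 2 p1 p3" "\<not> walk_le E 2 p1 p4"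
    "\<not> walk_le E 2 p1 p5" "\<not> walk_le E 2 p2 p4" "\<not> walk_le E 2 p2 p5"
    "\<not> walk_le E 2 p3 p5"
  using square_nth[of 0 1] square_nth[of 1 2] square_nth[of 2 3] square_nth[of 3 4]
    square_nth[of 4 5] square_nth[of 0 2] square_nth[of 0 3] square_nth[of 0 4]
    square_nth[of 0 5] square_nth[of 1 3] square_nth[of 1 4] square_nth[of 1 5]
    square_nth[of 2 4] square_nth[of 2 5] square_nth[of 3 5] distinct_path
  by (auto simp: square_def path_adj_def)

lemmas far_unfolded = far[unfolded not_walk_le_2_iff]

lemma reversed: "square_P6 V E p5 p4 p3 p2 p1 p0"
proof -
  have "induced_path (square E) (rev [p0, p1, p2, p3, p4, p5])"
    using induced_in_square by (simp only: induced_path_rev)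
  then show ?thesis
    using P6_banner_free_graph_axioms by (simp add: square_P6_def square_P6_axioms_def)
qed

lemma inner_not_adjacent: "\<not> E p1 p2" "\<not> E p2 p3" "\<not> E p3 p4"
  using square_P4_inner_not_adjacent near far unfolding square_def by blast+

lemma inner_midpoints:
  obtains q1 q2 q3 where "E p1 q1" "E q1 p2" "E p2 q2" "E q2 p3" "E p3 q3" "E q3 p4"
  using square_nonadjacent_midpoint near inner_not_adjacent by metis

lemma not_both_end_pairs_adjacent:
  assumes "E p0 p1" "E p4 p5"
  shows False
proof -
  obtain q1 q2 q3 where q: "E p1 q1" "E q1 p2" "E p2 q2" "E q2 p3" "E p3 q3" "E q3 p4"
    by (rule inner_midpoints)
  note spine = assms q far_unfolded inner_not_adjacent edge_sym
  have "E q1 q2" using no_induced_P6[of p0 p1 q1 p2 q2 p3] spine by smt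
  moreover have "E q2 q3" using no_induced_P6[of p2 q2 p3 q3 p4 p5] spine by smt
  moreover have "E q1 q3"
    using no_induced_P6[of p0 p1 q1 q2 q3 p4] spine calculation by smt
  ultimately show False using no_induced_P6[of p0 p1 q1 q3 p4 p5] spine by smt
qed

lemma midpoints_adjacent_left_edge:
  assumes "E p0 p1"
    and q: "E p1 q1" "E q1 p2" "E p2 q2" "E q2 p3" "E p3 q3" "E q3 p4" "E p4 q4" "E q4 p5"
  shows "E q1 q2" "E q1 q3" "E q1 q4" "E q2 q3" "E q3 q4"
proof -
  note spine = assms far_unfolded inner_not_adjacent edge_sym
  show q12: "E q1 q2" using no_induced_P6[of p0 p1 q1 p2 q2 p3] spine by smt
  show q13: "E q1 q3"
    using no_induced_P6[of p0 p1 q1 q2 p3 q3] no_induced_P6[of p0 p1 q1 q2 q3 p4] spine q12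
    by smt
  show q14: "E q1 q4"
    using no_induced_P6[of p0 p1 q1 q3 p4 q4] no_induced_P6[of p0 p1 q1 q3 q4 p5] spine q13
    by smt
  show "E q2 q3" using no_induced_banner[of q1 q2 p3 q3 p1] spine q12 q13 by smt
  show "E q3 q4" using no_induced_banner[of q1 q3 p4 q4 p1] spine q13 q14 by smt
qed

lemma first_midpoints_adjacent:
  assumes "\<not> E p0 p1"
    and q: "E p0 q0" "E q0 p1" "E p1 q1" "E q1 p2" "E p2 q2" "E q2 p3" "E p3 q3" "E q3 p4"
      "E p4 q4" "E q4 p5"
  shows "E q0 q1" "E q1 q2"
proof -
  note spine = assms far_unfolded inner_not_adjacent edge_sym
  show "E q0 q1"
    using no_induced_banner[of q0 p1 q1 q3 p0] no_induced_P6[of p0 q0 p1 q1 q3 p3]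
      no_induced_banner[of q0 p1 q1 q2 p0] no_induced_P6[of p0 q0 p1 q1 q2 p3]
      no_induced_P6[of p1 q1 p2 q2 q3 p4] no_induced_P6[of p1 q1 p2 q2 p3 q3] spine
    by smt
  show "E q1 q2"
    using no_induced_banner[of q1 p2 q2 q4 p1] no_induced_P6[of p1 q1 p2 q2 q4 p4]
      no_induced_banner[of q1 p2 q2 q3 p1] no_induced_P6[of p1 q1 p2 q2 q3 p4]
      no_induced_P6[of p2 q2 p3 q3 q4 p5] no_induced_P6[of p2 q2 p3 q3 p4 q4] spine
    by smt
qed

lemma midpoints_adjacent_no_end_edge:
  assumes ends: "\<not> E p0 p1" "\<not> E p4 p5"
    and q: "E p0 q0" "E q0 p1" "E p1 q1" "E q1 p2" "E p2 q2" "E q2 p3" "E p3 q3" "E q3 p4"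
      "E p4 q4" "E q4 p5"
  shows "E q0 q1" "E q1 q2" "E q2 q3" "E q3 q4"
proof -
  interpret rev: square_P6 V E p5 p4 p3 p2 p1 p0 by (rule reversed)
  show "E q0 q1" "E q1 q2" using first_midpoints_adjacent[OF ends(1) q] by blast+
  have "\<not> E p5 p4" using ends(2) edge_sym by blast
  moreover have "E p5 q4" "E q4 p4" "E p4 q3" "E q3 p3" "E p3 q2" "E q2 p2" "E p2 q1" "E q1 p1"
      "E p1 q0" "E q0 p0"
    using q edge_sym by blast+
  ultimately have "E q4 q3" "E q3 q2" by (rule rev.first_midpoints_adjacent)+
  then show "E q2 q3" "E q3 q4" using edge_sym by blast+
qed

end

locale eds_square_P6 = square_P6 +
  fixes D :: "'a set"
  assumes eds: "efficient_dominating_set V E D"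
begin

abbreviation \<delta> :: "'a \<Rightarrow> 'a" where "\<delta> \<equiv> dominator E D"

lemma dominator_spec:
  assumes "v \<in> V"
  shows "\<delta> v \<in> D \<and> (\<delta> v = v \<or> E v (\<delta> v)) \<and> (\<forall>d\<in>D. d = v \<or> E v d \<longrightarrow> d = \<delta> v)"
  using dominator_in_D[OF eds assms] dominator_eq_or_adj[OF eds assms]
    dominator_unique[OF eds assms] by metis

lemma D_independent: "\<forall>x\<in>D. \<forall>y\<in>D. \<not> E x y"
  using efficient_dominating_set_independent[OF eds] by blast

lemma left_end_pair_not_adjacent: "\<not> E p0 p1"
proof
  assume p01: "E p0 p1"
  obtain q1 q2 q3 where q: "E p1 q1" "E q1 p2" "E p2 q2" "E q2 p3" "E p3 q3" "E q3 p4"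
    by (rule inner_midpoints)
  show False
  proof (cases "E p4 p5")
    case True
    with p01 show False by (rule not_both_end_pairs_adjacent)
  next
    case False
    then obtain q4 where q4: "E p4 q4" "E q4 p5"
      using square_nonadjacent_midpoint near(5) by metis
    note qq = midpoints_adjacent_left_edge[OF p01 q q4]
    have V: "p0 \<in> V" "p1 \<in> V" "p2 \<in> V" "p3 \<in> V" "p4 \<in> V" "p5 \<in> V"
        "q1 \<in> V" "q2 \<in> V" "q3 \<in> V" "q4 \<in> V"
      using p01 q q4 edge_in_V edge_sym by metis+
    show False
      using no_induced_P6[of "\<delta> p0" p0 p1 q1 q4 p4]
        no_induced_P6[of p0 p1 q1 q3 p3 "\<delta> p3"]
        no_induced_P6[of p0 p1 q1 q3 p4 "\<delta> p4"]
        no_induced_P6[of p0 p1 q1 q4 p4 "\<delta> p4"]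
        no_induced_P6[of p0 p1 q1 q4 p5 "\<delta> p5"]
        no_induced_P6[of p0 p1 q1 q2 p3 "\<delta> q3"]
        no_induced_P6[of p0 p1 q1 q3 "\<delta> q4" p5]
        no_induced_P6[of p0 p1 q1 q4 "\<delta> p4" p3]
        no_induced_banner[of q1 q4 p4 "\<delta> p4" p2]
        no_induced_banner[of "\<delta> p4" p4 q3 q1 p5]
        V[THEN dominator_spec] D_independent p01 False q q4 qq far_unfolded inner_not_adjacent
        edge_sym
      by smt
  qed
qed

lemma some_end_pair_adjacent: "E p0 p1 \<or> E p4 p5"
proof (rule ccontr)
  assume "\<not> (E p0 p1 \<or> E p4 p5)"
  then have ends: "\<not> E p0 p1" "\<not> E p4 p5" by blast+
  obtain q1 q2 q3 where q: "E p1 q1" "E q1 p2" "E p2 q2" "E q2 p3" "E p3 q3" "E q3 p4"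
    by (rule inner_midpoints)
  obtain q0 q4 where q04: "E p0 q0" "E q0 p1" "E p4 q4" "E q4 p5"
    using square_nonadjacent_midpoint near(1,5) ends by metis
  note qq = midpoints_adjacent_no_end_edge[OF ends q04(1,2) q q04(3,4)]
  have V: "p0 \<in> V" "p1 \<in> V" "p2 \<in> V" "p3 \<in> V" "p4 \<in> V" "p5 \<in> V"
      "q0 \<in> V" "q1 \<in> V" "q2 \<in> V" "q3 \<in> V" "q4 \<in> V"
    using q q04 edge_in_V edge_sym by metis+
  show False
    using
      no_induced_P6[of "\<delta> p0" p0 q0 q1 p2 "\<delta> p2"]
      no_induced_P6[of "\<delta> p0" p0 q0 q2 p3 "\<delta> p3"]
      no_induced_P6[of "\<delta> p1" p1 q0 q2 p3 "\<delta> p3"]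
      no_induced_P6[of "\<delta> p1" p1 q1 q2 p3 "\<delta> p3"]
      no_induced_P6[of "\<delta> p1" p1 q1 q3 p4 "\<delta> p4"]
      no_induced_P6[of "\<delta> p2" p2 q1 q4 p4 "\<delta> p4"]
      no_induced_P6[of "\<delta> p2" p2 q2 q3 p4 "\<delta> p4"]
      no_induced_P6[of "\<delta> p2" p2 q2 q4 p4 "\<delta> p4"]
      no_induced_P6[of "\<delta> p2" p2 q2 q4 p5 "\<delta> p5"]
      no_induced_P6[of "\<delta> p3" p3 q3 q4 p5 "\<delta> p5"]
      no_induced_P6[of "\<delta> p0" p0 q0 p1 "\<delta> p1" p2]
      no_induced_P6[of "\<delta> p2" p2 q2 q3 "\<delta> q3" p5]
      no_induced_P6[of "\<delta> p3" p3 q2 q1 "\<delta> q1" p0]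
      no_induced_P6[of "\<delta> p5" p5 q4 p4 "\<delta> p4" p3]
      no_induced_P6[of "\<delta> p1" p1 q1 q2 q3 p4]
      no_induced_P6[of "\<delta> p2" p2 q1 q3 q4 p5]
      no_induced_P6[of "\<delta> p2" p2 q2 q3 q4 p5]
      no_induced_P6[of "\<delta> p3" p3 q2 q1 q0 p0]
      no_induced_P6[of "\<delta> p4" p4 q3 q2 q1 p1]
      no_induced_P6[of p2 "\<delta> p3" p3 q3 q4 p5]
      no_induced_banner[of q1 "\<delta> q1" p3 q2 p1]
      no_induced_banner[of q2 "\<delta> p4" p4 q4 p2]
      no_induced_banner[of q2 "\<delta> q2" p1 q0 p3]
      no_induced_banner[of q2 "\<delta> q2" p4 q3 p2]
      no_induced_banner[of q3 "\<delta> p2" p2 q1 p4]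
      no_induced_banner[of q3 "\<delta> p2" p2 q2 p4]
      no_induced_banner[of q4 "\<delta> p3" p3 q3 p5]
      V[THEN dominator_spec] D_independent ends q q04 qq far_unfolded inner_not_adjacent edge_sym
    by smt
qed

end

lemma (in P6_banner_free_graph) square_P6_free:
  assumes eds: "efficient_dominating_set V E D"
  shows "P_free 6 V (square E)"
  unfolding P_free_def has_induced_path_iff
proof
  assume "\<exists>xs. length xs = 6 \<and> set xs \<subseteq> V \<and> induced_path (square E) xs"
  then obtain p0 p1 p2 p3 p4 p5 where path: "induced_path (square E) [p0, p1, p2, p3, p4, p5]"
    by (auto simp: numeral_eq_Suc length_Suc_conv)
  interpret eds_square_P6 V E p0 p1 p2 p3 p4 p5 D
    by (intro eds_square_P6.intro square_P6.intro eds_square_P6_axioms.intro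
        square_P6_axioms.intro P6_banner_free_graph_axioms path eds)
  interpret rev: eds_square_P6 V E p5 p4 p3 p2 p1 p0 D
    by (intro eds_square_P6.intro reversed eds_square_P6_axioms.intro eds)
  show False
    using some_end_pair_adjacent left_end_pair_not_adjacent rev.left_end_pair_not_adjacent
      edge_sym by blast
qed

theorem theorem1:
  fixes V :: "'a set" and E :: "'a \<Rightarrow> 'a \<Rightarrow> bool"
  assumes "simple_graph V E"
    and "P_free 6 V E"
    and "banner_free V E"
    and "\<exists>D. efficient_dominating_set V E D"
  shows "P_free 6 V (square E)"
proof -
  interpret P6_banner_free_graph V E
    using assms(1-3) by unfold_locales
  from assms(4) show ?thesis
    using square_P6_free by blast
qed

end
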